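(* Let $U$ be a finite nonempty set, $(T,I,N)$ a residual triplet, $\widetilde{R}$ a $T$-preorder relation on $U$, $A$ a fuzzy set on $U$, and $L:\mathbb{R}\times\mathbb{R}\to\mathbb{R}^+$ a loss function of $\lor$-type. Let $\hat{A}:U\to[0,1]$ be an optimal solution of the problem $$\text{minimize }\sum_{u\in U}L(A(u),\hat{A}(u))\quad\text{subject to } T(\widetilde{R}(u,v),\hat{A}(v))\le\hat{A}(u)\ (u,v\in U),\quad 0\le\hat{A}(u)\le1\ (u\in U).$$ Define $U^-=\{u\in U;\hat{A}(u)<A(u)\}$, $U^0=\{u\in U;\hat{A}(u)=A(u)\}$, $U^+=\{u\in U;\hat{A}(u)>A(u)\}$. Then $$\hat{A}(u)=\max\{T(\widetilde{R}(u,v),\hat{A}(v)); v\in U^-\cup U^0\}\quad\text{for every } u\in U^+,$$ and $$\hat{A}(u)=\min\{I(\widetilde{R}(v,u),\hat{A}(v)); v\in U^+\cup U^0\}\quad\text{for every } u\in U^-.$$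
   Context: A residual triplet $(T,I,N)$ consists of a left-continuous $t$-norm $T$, its residual implicator $I(x,y)=\sup\{\beta\in[0,1]: T(x,\beta)\le y\}$ and $N(x)=I(x,0)$. $\widetilde{R}:U\times U\to[0,1]$ is a $T$-preorder if reflexive and $T$-transitive ($T(\widetilde{R}(u,v),\widetilde{R}(v,w))\le\widetilde{R}(u,w)$). A fuzzy set on $U$ is a map $U\to[0,1]$. A loss function $L$ is of $\lor$-type if for every real $a$: $L(a,a)=0$; the functions $x\mapsto L(x,a)$ and $x\mapsto L(a,x)$ are increasing for $x>a$; and these functions are decreasing for $x<a$. *)

theory Defs
  imports Complex_Main
begin

definition tnorm :: "(real \<Rightarrow> real \<Rightarrow> real) \<Rightarrow> bool" where
  "tnorm T \<longleftrightarrow>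
     (\<forall>x\<in>{0..1}. \<forall>y\<in>{0..1}. T x y \<in> {0..1}) \<and>
     (\<forall>x\<in>{0..1}. \<forall>y\<in>{0..1}. T x y = T y x) \<and>
     (\<forall>x\<in>{0..1}. \<forall>y\<in>{0..1}. \<forall>z\<in>{0..1}. T x (T y z) = T (T x y) z) \<and>
     (\<forall>x\<in>{0..1}. \<forall>y\<in>{0..1}. \<forall>z\<in>{0..1}. y \<le> z \<longrightarrow> T x y \<le> T x z) \<and>
     (\<forall>x\<in>{0..1}. T x 1 = x)"

text \<open>Left-continuity (in the first argument; by commutativity in both).\<close>
definition left_continuous_tnorm :: "(real \<Rightarrow> real \<Rightarrow> real) \<Rightarrow> bool" where
  "left_continuous_tnorm T \<longleftrightarrow> tnorm T \<and>
     (\<forall>x\<in>{0<..1}. \<forall>y\<in>{0..1}. continuous (at_left x) (\<lambda>z. T z y))"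

definition residual_imp :: "(real \<Rightarrow> real \<Rightarrow> real) \<Rightarrow> real \<Rightarrow> real \<Rightarrow> real" where
  "residual_imp T x y = Sup {\<beta>. \<beta> \<in> {0..1} \<and> T x \<beta> \<le> y}"

definition T_preorder :: "(real \<Rightarrow> real \<Rightarrow> real) \<Rightarrow> 'a set \<Rightarrow> ('a \<Rightarrow> 'a \<Rightarrow> real) \<Rightarrow> bool" where
  "T_preorder T U R \<longleftrightarrow>
     (\<forall>u\<in>U. \<forall>v\<in>U. R u v \<in> {0..1}) \<and>
     (\<forall>u\<in>U. R u u = 1) \<and>
     (\<forall>u\<in>U. \<forall>v\<in>U. \<forall>w\<in>U. T (R u v) (R v w) \<le> R u w)"

definition fuzzy_set :: "'a set \<Rightarrow> ('a \<Rightarrow> real) \<Rightarrow> bool" where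
  "fuzzy_set U A \<longleftrightarrow> (\<forall>u\<in>U. A u \<in> {0..1})"

definition vee_type_loss :: "(real \<Rightarrow> real \<Rightarrow> real) \<Rightarrow> bool" where
  "vee_type_loss L \<longleftrightarrow>
     (\<forall>a b. L a b \<ge> 0) \<and>
     (\<forall>a. L a a = 0) \<and>
     (\<forall>a. strict_mono_on {a<..} (\<lambda>x. L x a)) \<and>
     (\<forall>a. strict_mono_on {a<..} (\<lambda>x. L a x)) \<and>
     (\<forall>a. strict_antimono_on {..<a} (\<lambda>x. L x a)) \<and>
     (\<forall>a. strict_antimono_on {..<a} (\<lambda>x. L a x))"

definition feasible :: "(real \<Rightarrow> real \<Rightarrow> real) \<Rightarrow> 'a set \<Rightarrow> ('a \<Rightarrow> 'a \<Rightarrow> real) \<Rightarrow> ('a \<Rightarrow> real) \<Rightarrow> bool" where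
  "feasible T U R B \<longleftrightarrow>
     (\<forall>u\<in>U. \<forall>v\<in>U. T (R u v) (B v) \<le> B u) \<and> (\<forall>u\<in>U. 0 \<le> B u \<and> B u \<le> 1)"

definition optimal_solution ::
  "(real \<Rightarrow> real \<Rightarrow> real) \<Rightarrow> (real \<Rightarrow> real \<Rightarrow> real) \<Rightarrow> 'a set \<Rightarrow> ('a \<Rightarrow> 'a \<Rightarrow> real)
     \<Rightarrow> ('a \<Rightarrow> real) \<Rightarrow> ('a \<Rightarrow> real) \<Rightarrow> bool" where
  "optimal_solution L T U R A Ah \<longleftrightarrow> feasible T U R Ah \<and>
     (\<forall>B. feasible T U R B \<longrightarrow> (\<Sum>u\<in>U. L (A u) (Ah u)) \<le> (\<Sum>u\<in>U. L (A u) (B u)))"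

end

(* The set Ah' := sup over x of T(R(w,x), min(A,Ah)(x)) is feasible and lies between A and Ah
   pointwise; as the loss is of \<or>-type, it is no worse than Ah at any point, so optimality forces
   Ah' = Ah.  Hence every value Ah w is transported, via T and R, from some point x, with value
   min(A x, Ah x).  If x lies in U+, then Ah w <= A x < Ah x; following such points strictly
   increases Ah, so by finiteness and T-transitivity the chain ends in U- or U0.  The second
   identity is the order dual, with the lower approximation inf over x of I(R(x,w), max(A,Ah)(x)).
   Both identities in fact hold at every point of U. *)

theory Submission
  imports Defs
begin

context
  fixes T :: "real \<Rightarrow> real \<Rightarrow> real"
  assumes T: "tnorm T"
begin

lemma tnorm_closed: "x \<in> {0..1} \<Longrightarrow> y \<in> {0..1} \<Longrightarrow> T x y \<in> {0..1}"
  and tnorm_commute: "x \<in> {0..1} \<Longrightarrow> y \<in> {0..1} \<Longrightarrow> T x y = T y x"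
  and tnorm_assoc: "x \<in> {0..1} \<Longrightarrow> y \<in> {0..1} \<Longrightarrow> z \<in> {0..1} \<Longrightarrow> T x (T y z) = T (T x y) z"
  and tnorm_mono_right: "x \<in> {0..1} \<Longrightarrow> y \<in> {0..1} \<Longrightarrow> z \<in> {0..1} \<Longrightarrow> y \<le> z \<Longrightarrow> T x y \<le> T x z"
  and tnorm_one_right: "x \<in> {0..1} \<Longrightarrow> T x 1 = x"
  using T unfolding tnorm_def by blast+

lemma tnorm_mono_left: "x \<in> {0..1} \<Longrightarrow> y \<in> {0..1} \<Longrightarrow> z \<in> {0..1} \<Longrightarrow> x \<le> y \<Longrightarrow> T x z \<le> T y z"
  using tnorm_commute tnorm_mono_right by metis

lemma tnorm_one_left: "x \<in> {0..1} \<Longrightarrow> T 1 x = x"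
  using tnorm_commute[of 1 x] tnorm_one_right by simp

lemma tnorm_le_right: "x \<in> {0..1} \<Longrightarrow> y \<in> {0..1} \<Longrightarrow> T x y \<le> y"
  using tnorm_mono_left[of x 1 y] tnorm_one_left by simp

lemma tnorm_zero_right: "x \<in> {0..1} \<Longrightarrow> T x 0 = 0"
  using tnorm_le_right[of x 0] tnorm_closed[of x 0] by simp

lemma residual_set_nonempty_bdd:
  assumes "r \<in> {0..1}" "y \<in> {0..1}"
  shows "0 \<in> {\<beta>. \<beta> \<in> {0..1} \<and> T r \<beta> \<le> y}" and "bdd_above {\<beta>. \<beta> \<in> {0..1} \<and> T r \<beta> \<le> y}"
  using assms tnorm_zero_right by (auto intro: bdd_aboveI[of _ 1])

lemma residual_imp_closed:
  assumes "r \<in> {0..1}" "y \<in> {0..1}"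
  shows "residual_imp T r y \<in> {0..1}"
  using residual_set_nonempty_bdd[OF assms] unfolding residual_imp_def
  by (auto intro: cSup_upper2 cSup_least)

lemma le_residual_imp:
  assumes "r \<in> {0..1}" "y \<in> {0..1}" "b \<in> {0..1}" "T r b \<le> y"
  shows "b \<le> residual_imp T r y"
  using residual_set_nonempty_bdd[OF assms(1,2)] assms unfolding residual_imp_def
  by (intro cSup_upper) auto

end

lemma left_continuous_tnorm_tnorm: "left_continuous_tnorm T \<Longrightarrow> tnorm T"
  unfolding left_continuous_tnorm_def by blast

context
  fixes T :: "real \<Rightarrow> real \<Rightarrow> real"
  assumes T: "left_continuous_tnorm T"
begin

text \<open>Left-continuity is exactly what makes the supremum defining the residual attained.\<close>
lemma tnorm_residual_imp_le:
  assumes r: "r \<in> {0..1}" and y: "y \<in> {0..1}"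
  shows "T r (residual_imp T r y) \<le> y"
proof -
  have T': "tnorm T" using T by (rule left_continuous_tnorm_tnorm)
  define S where "S = {\<beta>. \<beta> \<in> {0..1} \<and> T r \<beta> \<le> y}"
  define s where "s = Sup S"
  have S: "0 \<in> S" "bdd_above S"
    using residual_set_nonempty_bdd[OF T' r y] unfolding S_def by auto
  have s01: "s \<in> {0..1}"
    using residual_imp_closed[OF T' r y] unfolding s_def S_def residual_imp_def .
  have "T r s \<le> y"
  proof (cases "s = 0")
    case True
    then show ?thesis using tnorm_zero_right[OF T' r] y by simp
  next
    case False
    with s01 have s_pos: "s \<in> {0<..1}" by auto
    then have "((\<lambda>z. T z r) \<longlongrightarrow> T s r) (at_left s)"
      using T r unfolding left_continuous_tnorm_def continuous_within by blast
    moreover have "eventually (\<lambda>z. T z r \<le> y) (at_left s)"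
    proof -
      have "eventually (\<lambda>z. z \<in> {0<..<s}) (at_left s)"
        using eventually_at_left_real[of 0 s] s_pos by auto
      then show ?thesis
      proof (rule eventually_mono)
        fix z assume z: "z \<in> {0<..<s}"
        then obtain \<beta> where \<beta>: "\<beta> \<in> S" "z < \<beta>"
          using less_cSup_iff[of S z] S unfolding s_def by auto
        have "T z r = T r z"
          using tnorm_commute[OF T', of z r] z s_pos r by auto
        also have "\<dots> \<le> T r \<beta>"
          using tnorm_mono_right[OF T' r, of z \<beta>] z s_pos \<beta> unfolding S_def by auto
        finally show "T z r \<le> y" using \<beta> unfolding S_def by auto
      qed
    qed
    ultimately have "T s r \<le> y" by (rule tendsto_upperbound) simp
    then show ?thesis using tnorm_commute[OF T'] s01 r by simp
  qed
  then show ?thesis unfolding s_def S_def residual_imp_def .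
qed

lemma tnorm_le_iff_le_residual_imp:
  assumes "r \<in> {0..1}" "y \<in> {0..1}" "b \<in> {0..1}"
  shows "T r b \<le> y \<longleftrightarrow> b \<le> residual_imp T r y"
proof -
  have T': "tnorm T" using T by (rule left_continuous_tnorm_tnorm)
  have "T r b \<le> y" if "b \<le> residual_imp T r y"
  proof -
    have "T r b \<le> T r (residual_imp T r y)"
      using tnorm_mono_right[OF T'] residual_imp_closed[OF T'] assms that by simp
    then show ?thesis using tnorm_residual_imp_le assms by (meson order_trans)
  qed
  then show ?thesis using le_residual_imp[OF T'] assms by blast
qed

end

lemma T_preorder_closed: "T_preorder T U R \<Longrightarrow> u \<in> U \<Longrightarrow> v \<in> U \<Longrightarrow> R u v \<in> {0..1}"
  and T_preorder_refl: "T_preorder T U R \<Longrightarrow> u \<in> U \<Longrightarrow> R u u = 1"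
  and T_preorder_trans:
    "T_preorder T U R \<Longrightarrow> u \<in> U \<Longrightarrow> v \<in> U \<Longrightarrow> w \<in> U \<Longrightarrow> T (R u v) (R v w) \<le> R u w"
  unfolding T_preorder_def by blast+

lemma T_preorder_tnorm_trans:
  assumes "tnorm T" "T_preorder T U R" "u \<in> U" "v \<in> U" "w \<in> U" "b \<in> {0..1}"
  shows "T (R u v) (T (R v w) b) \<le> T (R u w) b"
proof -
  note R01 = T_preorder_closed[OF assms(2)]
  have "T (R u v) (T (R v w) b) = T (T (R u v) (R v w)) b"
    using tnorm_assoc[OF assms(1)] R01 assms by simp
  also have "\<dots> \<le> T (R u w) b"
    using tnorm_mono_left[OF assms(1)] tnorm_closed[OF assms(1)] T_preorder_trans[OF assms(2)] R01 assms
    by simp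
  finally show ?thesis .
qed

lemma feasibleD:
  "feasible T U R B \<Longrightarrow> u \<in> U \<Longrightarrow> v \<in> U \<Longrightarrow> T (R u v) (B v) \<le> B u"
  "feasible T U R B \<Longrightarrow> u \<in> U \<Longrightarrow> B u \<in> {0..1}"
  unfolding feasible_def by auto

text \<open>The upper and lower approximations of fuzzy rough set theory; for a T-preorder they are the
  least feasible set above \<open>G\<close> and the greatest feasible set below \<open>H\<close>.\<close>
definition upper_approx ::
  "(real \<Rightarrow> real \<Rightarrow> real) \<Rightarrow> 'a set \<Rightarrow> ('a \<Rightarrow> 'a \<Rightarrow> real) \<Rightarrow> ('a \<Rightarrow> real) \<Rightarrow> 'a \<Rightarrow> real" where
  "upper_approx T U R G w = Max ((\<lambda>x. T (R w x) (G x)) ` U)"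

definition lower_approx ::
  "(real \<Rightarrow> real \<Rightarrow> real) \<Rightarrow> 'a set \<Rightarrow> ('a \<Rightarrow> 'a \<Rightarrow> real) \<Rightarrow> ('a \<Rightarrow> real) \<Rightarrow> 'a \<Rightarrow> real" where
  "lower_approx T U R H w = Min ((\<lambda>x. residual_imp T (R x w) (H x)) ` U)"

context
  fixes U :: "'a set"
  assumes fin: "finite U"
begin

lemma upper_approx_attained:
  assumes "w \<in> U"
  shows "\<exists>x\<in>U. upper_approx T U R G w = T (R w x) (G x)"
proof -
  have "upper_approx T U R G w \<in> (\<lambda>x. T (R w x) (G x)) ` U"
    unfolding upper_approx_def using fin assms by (intro Max_in) auto
  then show ?thesis by auto
qed

lemma upper_approx_upper: "x \<in> U \<Longrightarrow> T (R w x) (G x) \<le> upper_approx T U R G w"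
  unfolding upper_approx_def using fin by (intro Max_ge) auto

lemma lower_approx_attained:
  assumes "w \<in> U"
  shows "\<exists>x\<in>U. lower_approx T U R H w = residual_imp T (R x w) (H x)"
proof -
  have "lower_approx T U R H w \<in> (\<lambda>x. residual_imp T (R x w) (H x)) ` U"
    unfolding lower_approx_def using fin assms by (intro Min_in) auto
  then show ?thesis by auto
qed

lemma lower_approx_lower: "x \<in> U \<Longrightarrow> lower_approx T U R H w \<le> residual_imp T (R x w) (H x)"
  unfolding lower_approx_def using fin by (intro Min_le) auto

end

context
  fixes T :: "real \<Rightarrow> real \<Rightarrow> real" and U :: "'a set" and R :: "'a \<Rightarrow> 'a \<Rightarrow> real"
  assumes fin: "finite U" and T: "tnorm T" and R: "T_preorder T U R"
begin

lemma upper_approx_least: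
  assumes "fuzzy_set U G" "feasible T U R B" "\<And>x. x \<in> U \<Longrightarrow> G x \<le> B x" "w \<in> U"
  shows "upper_approx T U R G w \<le> B w"
proof -
  obtain x where x: "x \<in> U" "upper_approx T U R G w = T (R w x) (G x)"
    using upper_approx_attained[OF fin assms(4)] by blast
  have "T (R w x) (G x) \<le> T (R w x) (B x)"
    using tnorm_mono_right[OF T] T_preorder_closed[OF R] feasibleD(2)[OF assms(2)] assms x
    unfolding fuzzy_set_def by simp
  also have "\<dots> \<le> B w" using feasibleD(1)[OF assms(2)] assms x by blast
  finally show ?thesis using x by simp
qed

lemma le_upper_approx:
  assumes "fuzzy_set U G" "w \<in> U"
  shows "G w \<le> upper_approx T U R G w"
proof -
  have "T (R w w) (G w) = G w"
    using T_preorder_refl[OF R] tnorm_one_left[OF T] assms unfolding fuzzy_set_def by simp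
  then show ?thesis using upper_approx_upper[OF fin assms(2), of T R w G] by simp
qed

lemma feasible_upper_approx:
  assumes G: "fuzzy_set U G"
  shows "feasible T U R (upper_approx T U R G)"
  unfolding feasible_def
proof (intro conjI ballI)
  fix u v assume u: "u \<in> U" and v: "v \<in> U"
  obtain x where x: "x \<in> U" "upper_approx T U R G v = T (R v x) (G x)"
    using upper_approx_attained[OF fin v] by blast
  have "T (R u v) (T (R v x) (G x)) \<le> T (R u x) (G x)"
    using T_preorder_tnorm_trans[OF T R u v x(1)] G x(1) unfolding fuzzy_set_def by blast
  also have "\<dots> \<le> upper_approx T U R G u" using upper_approx_upper[OF fin x(1)] .
  finally show "T (R u v) (upper_approx T U R G v) \<le> upper_approx T U R G u" using x by simp
next
  fix u assume u: "u \<in> U"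
  then obtain x where x: "x \<in> U" "upper_approx T U R G u = T (R u x) (G x)"
    using upper_approx_attained[OF fin] by blast
  show "0 \<le> upper_approx T U R G u" using le_upper_approx[OF G u] G u unfolding fuzzy_set_def by force
  show "upper_approx T U R G u \<le> 1"
    using x tnorm_closed[OF T] T_preorder_closed[OF R u] G unfolding fuzzy_set_def by fastforce
qed

end

context
  fixes T :: "real \<Rightarrow> real \<Rightarrow> real" and U :: "'a set" and R :: "'a \<Rightarrow> 'a \<Rightarrow> real"
  assumes fin: "finite U" and T: "left_continuous_tnorm T" and R: "T_preorder T U R"
begin

private lemmas T_tnorm = left_continuous_tnorm_tnorm[OF T]
  and residuation = tnorm_le_iff_le_residual_imp[OF T]
  and R01 = T_preorder_closed[OF R]

lemma residual_imp_mono_right: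
  assumes "r \<in> {0..1}" "y \<in> {0..1}" "z \<in> {0..1}" "y \<le> z"
  shows "residual_imp T r y \<le> residual_imp T r z"
  using residuation[of r z "residual_imp T r y"] tnorm_residual_imp_le[OF T, of r y]
    residual_imp_closed[OF T_tnorm] assms by simp

lemma T_preorder_residual_imp_trans:
  assumes "u \<in> U" "v \<in> U" "w \<in> U" "b \<in> {0..1}"
  shows "residual_imp T (R u w) b \<le> residual_imp T (R v w) (residual_imp T (R u v) b)"
proof -
  define c where "c = residual_imp T (R u w) b"
  have c01: "c \<in> {0..1}" unfolding c_def using residual_imp_closed[OF T_tnorm] R01 assms by simp
  have "T (R u v) (T (R v w) c) \<le> T (R u w) c"
    using T_preorder_tnorm_trans[OF T_tnorm R assms(1-3) c01] .
  also have "\<dots> \<le> b" unfolding c_def using tnorm_residual_imp_le[OF T] R01 assms by simp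
  finally show ?thesis
    using residuation residual_imp_closed[OF T_tnorm] tnorm_closed[OF T_tnorm] R01 assms c01
    unfolding c_def[symmetric] by simp
qed

lemma lower_approx_closed:
  assumes H: "fuzzy_set U H" and w: "w \<in> U"
  shows "lower_approx T U R H w \<in> {0..1}"
proof -
  obtain x where "x \<in> U" "lower_approx T U R H w = residual_imp T (R x w) (H x)"
    using lower_approx_attained[OF fin w] by blast
  then show ?thesis
    using residual_imp_closed[OF T_tnorm] R01 H w unfolding fuzzy_set_def by simp
qed

lemma lower_approx_greatest:
  assumes H: "fuzzy_set U H" and B: "feasible T U R B" and "\<And>x. x \<in> U \<Longrightarrow> B x \<le> H x" and w: "w \<in> U"
  shows "B w \<le> lower_approx T U R H w"
proof -
  obtain x where x: "x \<in> U" "lower_approx T U R H w = residual_imp T (R x w) (H x)"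
    using lower_approx_attained[OF fin w] by blast
  have "T (R x w) (B w) \<le> H x"
    using feasibleD(1)[OF B x(1) w] assms x(1) by (meson order_trans)
  then show ?thesis
    using residuation R01 feasibleD(2)[OF B] H x w unfolding fuzzy_set_def by simp
qed

lemma lower_approx_le:
  assumes H: "fuzzy_set U H" and w: "w \<in> U"
  shows "lower_approx T U R H w \<le> H w"
proof -
  have "lower_approx T U R H w \<le> residual_imp T (R w w) (H w)"
    using lower_approx_lower[OF fin w] .
  then have "T (R w w) (lower_approx T U R H w) \<le> H w"
    using residuation R01 lower_approx_closed[OF H w] H w unfolding fuzzy_set_def by simp
  then show ?thesis
    using T_preorder_refl[OF R w] tnorm_one_left[OF T_tnorm] lower_approx_closed[OF H w] by simp
qed

lemma feasible_lower_approx: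
  assumes H: "fuzzy_set U H"
  shows "feasible T U R (lower_approx T U R H)"
  unfolding feasible_def
proof (intro conjI ballI)
  fix u v assume u: "u \<in> U" and v: "v \<in> U"
  obtain x where x: "x \<in> U" "lower_approx T U R H u = residual_imp T (R x u) (H x)"
    using lower_approx_attained[OF fin u] by blast
  define c where "c = lower_approx T U R H v"
  have c01: "c \<in> {0..1}" using lower_approx_closed[OF H v] unfolding c_def .
  have Hx: "H x \<in> {0..1}" using H x(1) unfolding fuzzy_set_def by blast
  have "T (R x v) c \<le> H x"
    using residuation[OF R01[OF x(1) v] Hx c01] lower_approx_lower[OF fin x(1)] unfolding c_def by simp
  then have "T (R x u) (T (R u v) c) \<le> H x"
    using T_preorder_tnorm_trans[OF T_tnorm R x(1) u v c01] by linarith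
  then show "T (R u v) c \<le> lower_approx T U R H u"
    using residuation[OF R01[OF x(1) u] Hx tnorm_closed[OF T_tnorm R01[OF u v] c01]] x(2) by simp
qed (use lower_approx_closed[OF H] in auto)

end

lemma vee_type_loss_less_between:
  assumes L: "vee_type_loss L" and between: "min a c \<le> b" "b \<le> max a c" and "b \<noteq> c"
  shows "L a b < L a c"
proof -
  have incr: "strict_mono_on {a<..} (L a)" and decr: "strict_antimono_on {..<a} (L a)"
    and zero: "L a a = 0" and nonneg: "\<And>x. 0 \<le> L a x"
    using L unfolding vee_type_loss_def by blast+
  have less: "L a x < L a c" if "x \<noteq> a" "min a c \<le> x" "x \<le> max a c" "x \<noteq> c" for x
  proof (cases "a < c")
    case True
    with that show ?thesis by (intro strict_mono_onD[OF incr]) auto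
  next
    case False
    with that show ?thesis by (intro monotone_onD[OF decr]) auto
  qed
  show ?thesis
  proof (cases "b = a")
    case True
    have "c \<noteq> a" using True \<open>b \<noteq> c\<close> by simp
    then have "L a ((a + c) / 2) < L a c" by (intro less) (auto simp: min_def max_def)
    then show ?thesis using True zero nonneg[of "(a + c) / 2"] by simp
  qed (use less assms in blast)
qed

text \<open>Between \<open>A\<close> and \<open>Ah\<close>, \<open>B\<close> is pointwise no worse than \<open>Ah\<close>, and strictly better wherever it
  differs from \<open>Ah\<close>.\<close>
lemma optimal_solution_eqI:
  assumes fin: "finite U" and L: "vee_type_loss L" and opt: "optimal_solution L T U R A Ah"
    and B: "feasible T U R B"
    and between: "\<And>w. w \<in> U \<Longrightarrow> min (A w) (Ah w) \<le> B w \<and> B w \<le> max (A w) (Ah w)"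
    and w: "w \<in> U"
  shows "B w = Ah w"
proof (rule ccontr)
  assume ne: "B w \<noteq> Ah w"
  have le: "L (A x) (B x) \<le> L (A x) (Ah x)" if "x \<in> U" for x
  proof (cases "B x = Ah x")
    case False
    then show ?thesis using vee_type_loss_less_between[OF L] between[OF that] by (simp add: less_imp_le)
  qed simp
  have "L (A w) (B w) < L (A w) (Ah w)"
    using vee_type_loss_less_between[OF L] between[OF w] ne by blast
  then have "(\<Sum>x\<in>U. L (A x) (B x)) < (\<Sum>x\<in>U. L (A x) (Ah x))"
    using fin le w by (intro sum_strict_mono_ex1) blast+
  with opt B show False unfolding optimal_solution_def by (meson not_le)
qed

text \<open>Abstract form of both halves of the theorem: \<open>F w x b\<close> is the value transported from \<open>x\<close>
  to \<open>w\<close>. Following a point \<open>x\<close> with \<open>a x < f x\<close> strictly increases \<open>f\<close>, so by finiteness the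
  chain of such points ends at a point where \<open>f \<le> a\<close>.\<close>
lemma transport_from_point_below:
  fixes f a :: "'x \<Rightarrow> 'b::linorder" and F :: "'x \<Rightarrow> 'x \<Rightarrow> 'b \<Rightarrow> 'b"
  assumes fin: "finite U"
    and attained: "\<And>w. w \<in> U \<Longrightarrow> \<exists>x\<in>U. f w = F w x (min (a x) (f x))"
    and bounded: "\<And>w v. w \<in> U \<Longrightarrow> v \<in> U \<Longrightarrow> F w v (f v) \<le> f w"
    and shrinks: "\<And>w x. w \<in> U \<Longrightarrow> x \<in> U \<Longrightarrow> F w x (a x) \<le> a x"
    and mono: "\<And>w x. w \<in> U \<Longrightarrow> x \<in> U \<Longrightarrow> a x < f x \<Longrightarrow> F w x (a x) \<le> F w x (f x)"
    and trans: "\<And>w x v. w \<in> U \<Longrightarrow> x \<in> U \<Longrightarrow> v \<in> U \<Longrightarrow> F w x (F x v (f v)) \<le> F w v (f v)"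
    and w: "w \<in> U"
  shows "\<exists>v\<in>U. f v \<le> a v \<and> f w = F w v (f v)"
  using w
proof (induction w rule: measure_induct_rule[where f = "\<lambda>w. card {y\<in>U. f w < f y}"])
  case (less w)
  obtain x where x: "x \<in> U" "f w = F w x (min (a x) (f x))"
    using attained[OF less.prems] by blast
  show ?case
  proof (cases "f x \<le> a x")
    case True
    then show ?thesis using x by (auto simp: min_absorb2)
  next
    case False
    then have fw: "f w = F w x (a x)" using x by simp
    then have "f w < f x" using shrinks[OF less.prems x(1)] False by simp
    then have "{y\<in>U. f x < f y} \<subset> {y\<in>U. f w < f y}" using x(1) by auto
    then have "card {y\<in>U. f x < f y} < card {y\<in>U. f w < f y}"
      using fin by (intro psubset_card_mono) auto
    then obtain v where v: "v \<in> U" "f v \<le> a v" "f x = F x v (f v)"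
      using less.IH x(1) by blast
    have "f w \<le> F w x (f x)" using fw mono[OF less.prems x(1)] False by simp
    also have "\<dots> \<le> F w v (f v)" using trans[OF less.prems x(1) v(1)] v(3) by simp
    finally have "f w = F w v (f v)" using bounded[OF less.prems v(1)] by simp
    then show ?thesis using v by blast
  qed
qed

context
  fixes T L :: "real \<Rightarrow> real \<Rightarrow> real" and U :: "'a set"
    and R :: "'a \<Rightarrow> 'a \<Rightarrow> real" and A Ah :: "'a \<Rightarrow> real"
  assumes fin: "finite U" and R: "T_preorder T U R" and A: "fuzzy_set U A"
    and L: "vee_type_loss L" and opt: "optimal_solution L T U R A Ah"
begin

private lemma Ah_feasible: "feasible T U R Ah"
  using opt unfolding optimal_solution_def by blast

private lemma A_closed: "u \<in> U \<Longrightarrow> A u \<in> {0..1}"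
  using A unfolding fuzzy_set_def by blast

private lemma Ah_closed: "u \<in> U \<Longrightarrow> Ah u \<in> {0..1}"
  using feasibleD(2)[OF Ah_feasible] .

lemma optimal_solution_eq_upper_approx:
  assumes T: "tnorm T" and w: "w \<in> U"
  shows "Ah w = upper_approx T U R (\<lambda>x. min (A x) (Ah x)) w"
proof -
  define G where "G x = min (A x) (Ah x)" for x
  have G: "fuzzy_set U G" unfolding fuzzy_set_def G_def using A_closed Ah_closed by (auto simp: min_le_iff_disj)
  have "G x \<le> upper_approx T U R G x" "upper_approx T U R G x \<le> Ah x" if "x \<in> U" for x
    using le_upper_approx[OF fin T R G that] upper_approx_least[OF fin T R G Ah_feasible _ that]
    unfolding G_def by auto
  then have "upper_approx T U R G w = Ah w"
    using optimal_solution_eqI[OF fin L opt feasible_upper_approx[OF fin T R G] _ w]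
    unfolding G_def by force
  then show ?thesis unfolding G_def by simp
qed

lemma optimal_solution_eq_Max:
  assumes T: "tnorm T" and u: "u \<in> U"
  shows "Ah u = Max {T (R u v) (Ah v) | v. v \<in> U \<and> Ah v \<le> A v}"
proof -
  obtain v where v: "v \<in> U" "Ah v \<le> A v" "Ah u = T (R u v) (Ah v)"
  proof (rule transport_from_point_below[where F = "\<lambda>w x. T (R w x)", OF fin _ _ _ _ _ u, THEN bexE])
    show "\<exists>x\<in>U. Ah w = T (R w x) (min (A x) (Ah x))" if "w \<in> U" for w
      using optimal_solution_eq_upper_approx[OF T that] upper_approx_attained[OF fin that] by simp
    show "T (R w v) (Ah v) \<le> Ah w" if "w \<in> U" "v \<in> U" for w v
      using feasibleD(1)[OF Ah_feasible that] .
    show "T (R w x) (A x) \<le> A x" if "w \<in> U" "x \<in> U" for w x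
      using tnorm_le_right[OF T] T_preorder_closed[OF R] A_closed that by simp
    show "T (R w x) (A x) \<le> T (R w x) (Ah x)" if "w \<in> U" "x \<in> U" "A x < Ah x" for w x
      using tnorm_mono_right[OF T] T_preorder_closed[OF R] A_closed Ah_closed that by simp
    show "T (R w x) (T (R x v) (Ah v)) \<le> T (R w v) (Ah v)" if "w \<in> U" "x \<in> U" "v \<in> U" for w x v
      using T_preorder_tnorm_trans[OF T R that Ah_closed[OF that(3)]] .
  qed blast
  have "{T (R u v) (Ah v) | v. v \<in> U \<and> Ah v \<le> A v} = (\<lambda>v. T (R u v) (Ah v)) ` {v\<in>U. Ah v \<le> A v}"
    by auto
  then show ?thesis
    using fin v feasibleD(1)[OF Ah_feasible u] by (auto intro!: Max_eqI[symmetric])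
qed

lemma optimal_solution_eq_lower_approx:
  assumes T: "left_continuous_tnorm T" and w: "w \<in> U"
  shows "Ah w = lower_approx T U R (\<lambda>x. max (A x) (Ah x)) w"
proof -
  define H where "H x = max (A x) (Ah x)" for x
  have H: "fuzzy_set U H" unfolding fuzzy_set_def H_def using A_closed Ah_closed by (auto simp: le_max_iff_disj)
  have "Ah x \<le> lower_approx T U R H x" "lower_approx T U R H x \<le> H x" if "x \<in> U" for x
    using lower_approx_greatest[OF fin T R H Ah_feasible _ that] lower_approx_le[OF fin T R H that]
    unfolding H_def by auto
  then have "lower_approx T U R H w = Ah w"
    using optimal_solution_eqI[OF fin L opt feasible_lower_approx[OF fin T R H] _ w]
    unfolding H_def by force
  then show ?thesis unfolding H_def by simp
qed

text \<open>The order dual of \<open>optimal_solution_eq_Max\<close>: negating all values turns the residual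
  implicator into a transport to which \<open>transport_from_point_below\<close> applies.\<close>
lemma optimal_solution_eq_Min:
  assumes T: "left_continuous_tnorm T" and u: "u \<in> U"
  shows "Ah u = Min {residual_imp T (R v u) (Ah v) | v. v \<in> U \<and> Ah v \<ge> A v}"
proof -
  note T' = left_continuous_tnorm_tnorm[OF T] and R01 = T_preorder_closed[OF R]
  note residuation = tnorm_le_iff_le_residual_imp[OF T]
  have Ah_le: "Ah w \<le> residual_imp T (R v w) (Ah v)" if "w \<in> U" "v \<in> U" for w v
    using feasibleD(1)[OF Ah_feasible that(2,1)] residuation R01 Ah_closed that by simp
  obtain v where v: "v \<in> U" "A v \<le> Ah v" "Ah u = residual_imp T (R v u) (Ah v)"
  proof (rule transport_from_point_below[where f = "\<lambda>x. - Ah x" and a = "\<lambda>x. - A x"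
        and F = "\<lambda>w x b. - residual_imp T (R x w) (- b)", OF fin _ _ _ _ _ u, THEN bexE])
    show "\<exists>x\<in>U. - Ah w = - residual_imp T (R x w) (- min (- A x) (- Ah x))" if w: "w \<in> U" for w
    proof -
      obtain x where "x \<in> U" "Ah w = residual_imp T (R x w) (max (A x) (Ah x))"
        using optimal_solution_eq_lower_approx[OF T w] lower_approx_attained[OF fin w, of T R] by auto
      moreover have "- min (- A x) (- Ah x) = max (A x) (Ah x)" by (simp add: min_def max_def)
      ultimately show ?thesis by (metis minus_equation_iff)
    qed
    show "- residual_imp T (R v w) (- (- Ah v)) \<le> - Ah w" if "w \<in> U" "v \<in> U" for w v
      using Ah_le that by simp
    show "- residual_imp T (R x w) (- (- A x)) \<le> - A x" if "w \<in> U" "x \<in> U" for w x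
      using residuation tnorm_le_right[OF T'] R01 A_closed that by simp
    show "- residual_imp T (R x w) (- (- A x)) \<le> - residual_imp T (R x w) (- (- Ah x))"
      if "w \<in> U" "x \<in> U" "- A x < - Ah x" for w x
      using residual_imp_mono_right[OF fin T R] R01 A_closed Ah_closed that by simp
    show "- residual_imp T (R x w) (- (- residual_imp T (R v x) (- (- Ah v))))
        \<le> - residual_imp T (R v w) (- (- Ah v))" if "w \<in> U" "x \<in> U" "v \<in> U" for w x v
      using T_preorder_residual_imp_trans[OF fin T R that(3,2,1) Ah_closed[OF that(3)]] by simp
  qed auto
  have "{residual_imp T (R v u) (Ah v) | v. v \<in> U \<and> Ah v \<ge> A v}
      = (\<lambda>v. residual_imp T (R v u) (Ah v)) ` {v\<in>U. Ah v \<ge> A v}"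
    by auto
  then show ?thesis
    using fin v Ah_le[OF u] by (auto intro!: Min_eqI[symmetric])
qed

end

theorem theorem1:
  fixes U :: "'a set" and T L :: "real \<Rightarrow> real \<Rightarrow> real"
    and R :: "'a \<Rightarrow> 'a \<Rightarrow> real" and A Ah :: "'a \<Rightarrow> real"
  assumes "finite U" and "U \<noteq> {}"
    and "left_continuous_tnorm T"
    and "T_preorder T U R"
    and "fuzzy_set U A"
    and "vee_type_loss L"
    and "optimal_solution L T U R A Ah"
  shows "(\<forall>u\<in>U. Ah u > A u \<longrightarrow>
            Ah u = Max {T (R u v) (Ah v) | v. v \<in> U \<and> Ah v \<le> A v})
       \<and> (\<forall>u\<in>U. Ah u < A u \<longrightarrow>
            Ah u = Min {residual_imp T (R v u) (Ah v) | v. v \<in> U \<and> Ah v \<ge> A v})"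
  using optimal_solution_eq_Max[OF assms(1,4-7) left_continuous_tnorm_tnorm[OF assms(3)]]
    optimal_solution_eq_Min[OF assms(1,4-7,3)]
  by blast

end
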